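(* Consider the multicast coalitional game with player set $\mathcal{N}=\{1,\ldots,N\}$, $N\ge2$, and value function $$v(S)=\sum_{i\in S}U_i-\sum_{i\in S}\frac{\alpha_i}{R_S}-\frac{\beta+\gamma}{R_S},\qquad R_S=\min_{i\in S}R_i,$$ for nonempty $S\subseteq\mathcal{N}$. Suppose $P_{Rx,i}=P_{Rx}$ for all $i$, so that $\alpha_i=\alpha:=aP_{Rx}X$ for all $i$. Let $k\in\arg\min_{i\in\mathcal{N}}R_i$ and $j\in\arg\min_{i\in\mathcal{N}\setminus\{k\}}R_i$, and write $R_j=\lambda R_k$ with $\lambda\ge1$ (so $R_k$ and $R_j$ are the minimum and second minimum rates). If $$\lambda>1+\frac{\beta+\gamma}{\alpha(N-1)},$$ then the core is empty.
   Context: A transmitter multicasts a file of size $X>0$ bits to users $\mathcal{N}=\{1,\dots,N\}$. User $i$ has valuation $U_i\in\mathbb{R}$, downloads at rate $R_i>0$, and consumes receive power $P_{Rx,i}>0$; the transmitter transmits at power $P_{Tx}>0$. Costs per unit energy are $a>0$ at users and $b>0$ at the transmitter; bandwidth cost per second is $w>0$. Set $\alpha_i=aP_{Rx,i}X$, $\beta=bP_{Tx}X$, $\gamma=wX$. The core is the set of payoff vectors $(x_1,\dots,x_N)\in\mathbb{R}^N$ with $\sum_{i\in\mathcal{N}}x_i=v(\mathcal{N})$ and $\sum_{i\in S}x_i\ge v(S)$ for every nonempty $S\subseteq\mathcal{N}$. *)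

theory Defs
  imports "HOL-Analysis.Analysis"
begin

definition rate_min :: "(nat \<Rightarrow> real) \<Rightarrow> nat set \<Rightarrow> real" where
  "rate_min R S = Min (R ` S)"

text \<open>Value of a nonempty coalition S in the multicast game
  (alpha i = a P_Rx,i X, beta = b P_Tx X, gamma = w X).\<close>
definition mc_value ::
  "(nat \<Rightarrow> real) \<Rightarrow> (nat \<Rightarrow> real) \<Rightarrow> (nat \<Rightarrow> real) \<Rightarrow> real \<Rightarrow> real \<Rightarrow> nat set \<Rightarrow> real" where
  "mc_value U R \<alpha> \<beta> \<gamma> S =
     (\<Sum>i\<in>S. U i) - (\<Sum>i\<in>S. \<alpha> i / rate_min R S) - (\<beta> + \<gamma>) / rate_min R S"

text \<open>Core of a game with player set Nset and value function v;
  payoff vectors are functions on the players (values outside Nset irrelevant).\<close>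
definition core :: "nat set \<Rightarrow> (nat set \<Rightarrow> real) \<Rightarrow> (nat \<Rightarrow> real) set" where
  "core Nset v = {x. (\<Sum>i\<in>Nset. x i) = v Nset \<and>
      (\<forall>S. S \<subseteq> Nset \<and> S \<noteq> {} \<longrightarrow> (\<Sum>i\<in>S. x i) \<ge> v S)}"

end

theory Submission
  imports Defs
begin

text \<open>A core allocation pays the slowest user k at least v {k} and everybody else at least
  v (N - {k}); since it distributes exactly v N, this forces v {k} + v (N - {k}) \<le> v N.
  With equal receive powers, v {k} + v (N - {k}) - v N = (N - 1) \<alpha> / R_k - ((N - 1) \<alpha> + \<beta> + \<gamma>) / R_j,
  because removing k raises the common rate of the others from R_k to R_j. This is positive exactly
  when R_j / R_k > 1 + (\<beta> + \<gamma>) / (\<alpha> (N - 1)).\<close>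

lemma core_split_le:
  assumes "x \<in> core A v" "finite A" "S \<subseteq> A" "S \<noteq> {}" "S \<noteq> A"
  shows "v S + v (A - S) \<le> v A"
proof -
  have "v S \<le> sum x S" "v (A - S) \<le> sum x (A - S)"
    using assms unfolding core_def by auto
  moreover have "sum x A = v A"
    using assms(1) unfolding core_def by simp
  moreover have "sum x A = sum x S + sum x (A - S)"
    using assms(2,3) by (metis add.commute sum.subset_diff)
  ultimately show ?thesis by linarith
qed

lemma rate_min_eqI:
  assumes "finite S" "i \<in> S" "\<forall>l\<in>S. R i \<le> R l"
  shows "rate_min R S = R i"
  unfolding rate_min_def using assms by (intro Min_eqI) auto

lemma mc_value_const_cost:
  assumes "\<forall>i\<in>S. \<alpha> i = c"
  shows "mc_value U R \<alpha> \<beta> \<gamma> S = sum U S - (real (card S) * c + (\<beta> + \<gamma>)) / rate_min R S"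
  using assms unfolding mc_value_def by (simp add: add_divide_distrib)

lemma rate_ratio_le:
  fixes \<alpha> m c Rk Rj :: real
  assumes "\<alpha> > 0" "m > 0" "Rk > 0" "Rj > 0"
    and "m * \<alpha> / Rk \<le> (m * \<alpha> + c) / Rj"
  shows "Rj / Rk \<le> 1 + c / (\<alpha> * m)"
  using assms by (simp add: field_simps)

theorem theorem5:
  fixes N :: nat and U R PRx :: "nat \<Rightarrow> real"
    and X a b w PTx P :: real and k j :: nat
  assumes N2: "N \<ge> 2"
    and X: "X > 0" and a: "a > 0" and b: "b > 0" and w: "w > 0" and PTx: "PTx > 0"
    and Rpos: "\<forall>i\<in>{1..N}. R i > 0"
    and PRx_pos: "\<forall>i\<in>{1..N}. PRx i > 0"
    and PRx_eq: "\<forall>i\<in>{1..N}. PRx i = P"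
    and k: "k \<in> {1..N}" "\<forall>i\<in>{1..N}. R k \<le> R i"
    and j: "j \<in> {1..N} - {k}" "\<forall>i\<in>{1..N} - {k}. R j \<le> R i"
    and lam: "R j / R k > 1 + (b * PTx * X + w * X) / ((a * P * X) * (real N - 1))"
  shows "core {1..N} (mc_value U R (\<lambda>i. a * PRx i * X) (b * PTx * X) (w * X)) = {}"
proof (rule ccontr)
  define v where "v = mc_value U R (\<lambda>i. a * PRx i * X) (b * PTx * X) (w * X)"
  define \<alpha> where "\<alpha> = a * P * X"
  define c where "c = b * PTx * X + w * X"
  assume "core {1..N} v \<noteq> {}"
  then obtain x where "x \<in> core {1..N} v" by blast
  then have split: "v {k} + v ({1..N} - {k}) \<le> v {1..N}"
    using k j by (intro core_split_le) auto
  have v_eq: "v S = sum U S - (real (card S) * \<alpha> + c) / rate_min R S"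
    if "S \<subseteq> {1..N}" for S
    unfolding v_def c_def \<alpha>_def
    using that PRx_eq by (subst mc_value_const_cost[where c = "a * P * X"]) auto
  have card_rest: "real (card ({1..N} - {k})) = real N - 1"
    using k N2 by (simp add: of_nat_diff)
  have "rate_min R {1..N} = R k" "rate_min R {k} = R k" "rate_min R ({1..N} - {k}) = R j"
    using k j by (auto intro: rate_min_eqI)
  then have "v {1..N} = sum U {1..N} - (real N * \<alpha> + c) / R k"
    "v {k} = U k - (\<alpha> + c) / R k"
    "v ({1..N} - {k}) = sum U ({1..N} - {k}) - ((real N - 1) * \<alpha> + c) / R j"
    using v_eq[of "{1..N}"] v_eq[of "{k}"] v_eq[of "{1..N} - {k}"] k card_rest by auto
  moreover have "sum U {1..N} = U k + sum U ({1..N} - {k})"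
    using k by (simp add: sum.remove)
  ultimately have "(real N - 1) * \<alpha> / R k \<le> ((real N - 1) * \<alpha> + c) / R j"
    using split by (simp add: add_divide_distrib diff_divide_distrib left_diff_distrib)
  moreover have "\<alpha> > 0"
    using PRx_pos PRx_eq k a X unfolding \<alpha>_def by auto
  ultimately have "R j / R k \<le> 1 + c / (\<alpha> * (real N - 1))"
    using Rpos k j N2 by (intro rate_ratio_le) auto
  with lam show False unfolding \<alpha>_def c_def by simp
qed

end
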